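(* IO-acyclicity and boundedness are not sufficient to guarantee that a (cooperative) multiagent system is stabilizing: there exist IO-acyclic and bounded multiagent systems that are not stabilizing.
   Context: Fix a Herbrand base $HB$. A logic program is a set of ground clauses $H\leftarrow L_1,\dots,L_m$; $S$ is a stable model of $P$ if $S$ is the least model of the reduct $P^S$. The atom dependency graph of $P$ has an edge from $a$ to $b$ iff some clause with head $a$ has $b$ or $\neg b$ in its body; $b$ is relevant to $a$ if there is a path from $a$ to $b$. $P$ is acyclic if the graph has no infinite path, bounded if each atom's definition is finite. An agent is $A=(IDB,HBE,HIN,\delta)$ with $IDB$ acyclic, $HBE$ sensed environment atoms, $HIN$ input atoms (neither appearing as heads in $IDB$, disjoint), initial state $\delta$; a state is $(EDB,IN)$, $EDB\subseteq HBE$, $IN\subseteq HIN$, and the agent's stable model at it is that of $IDB\cup EDB\cup IN$. A cooperative multiagent system $\mathcal A=(A_1,\dots,A_n)$ requires shared heads to have identical definitions, $HIN_i\subseteq\bigcup_j(head(IDB_j)\cup HBE_j)$, and no environment atom as a head in any $IDB_j$. $HB_i=head(IDB_i)\cup HBE_i\cup HIN_i$; $D(i,j)=HIN_i\cap(head(IDB_j)\cup HBE_j)$. An environment change $(T,F)$ updates each $EDB_i$ to $(EDB_i\setminus(F\cap HBE_i))\cup(T\cap HBE_i)$; a communication $j\leadsto i$ sets $IN_i$ to $(IN_i\setminus D(i,j))\cup(D(i,j)\cap M_j)$ with $M_j$ the current stable model of $A_j$. A run is an infinite sequence of such transitions from the initial state in which each $j\leadsto i$ with $D(i,j)\ne\emptyset$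 occurs infinitely often and environment changes stop after some point. $M_{i,k}$ denotes $A_i$'s stable model at point $k$; the stabilized environment is the union of the final $EDB_i$. $IDB_{\mathcal A}=\bigcup_i IDB_i$. The I/O graph is the atom dependency graph of $IDB_{\mathcal A}$ restricted to atoms relevant to some input atom; $\mathcal A$ is IO-acyclic if it has no infinite path, bounded if $IDB_{\mathcal A}$ is bounded. A run is convergent if for every atom $a$, from some point on either all agents with $a\in HB_i$ have $a\in M_{i,k}$ or all have $a\notin M_{i,k}$; strongly convergent if also from some point all $M_{i,k}$ stay constant. $Conv(\mathcal R)$ is the set of atoms eventually true in this sense. Weakly stabilizing: every run convergent and $Conv(\mathcal R)$ a stable model of $IDB_{\mathcal A}\cup EDB$ ($EDB$ the stabilized environment). Stabilizing: weakly stabilizing and every run strongly convergent. *)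

theory Defs
  imports Main
begin

text \<open>A ground clause  H <- B1,...,Bk, not C1,...,not Cl  is Clause H [B1..Bk] [C1..Cl].
  Atoms are elements of the type 'a (the Herbrand base is UNIV).\<close>
datatype 'a clause = Clause (chead: 'a) (cpos: "'a list") (cneg: "'a list")

type_synonym 'a program = "'a clause set"

definition heads :: "'a program \<Rightarrow> 'a set" where
  "heads P = chead ` P"

definition def_of :: "'a program \<Rightarrow> 'a \<Rightarrow> 'a program" where
  "def_of P a = {c \<in> P. chead c = a}"

definition facts :: "'a set \<Rightarrow> 'a program" where
  "facts X = {Clause a [] [] | a. a \<in> X}"

definition reduct :: "'a program \<Rightarrow> 'a set \<Rightarrow> 'a program" where
  "reduct P S = {Clause h p [] | h p n. Clause h p n \<in> P \<and> set n \<inter> S = {}}"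

definition is_def_model :: "'a program \<Rightarrow> 'a set \<Rightarrow> bool" where
  "is_def_model P I \<longleftrightarrow> (\<forall>c\<in>P. set (cpos c) \<subseteq> I \<longrightarrow> chead c \<in> I)"

definition least_model :: "'a program \<Rightarrow> 'a set" where
  "least_model P = \<Inter> {I. is_def_model P I}"

definition stable_model :: "'a program \<Rightarrow> 'a set \<Rightarrow> bool" where
  "stable_model P S \<longleftrightarrow> S = least_model (reduct P S)"

definition dep :: "'a program \<Rightarrow> 'a \<Rightarrow> 'a \<Rightarrow> bool" where
  "dep P a b \<longleftrightarrow> (\<exists>c\<in>P. chead c = a \<and> (b \<in> set (cpos c) \<or> b \<in> set (cneg c)))"

definition relevant :: "'a program \<Rightarrow> 'a \<Rightarrow> 'a \<Rightarrow> bool" where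
  "relevant P b a \<longleftrightarrow> (dep P)\<^sup>*\<^sup>* a b"

definition acyclic_prog :: "'a program \<Rightarrow> bool" where
  "acyclic_prog P \<longleftrightarrow> \<not> (\<exists>f::nat \<Rightarrow> 'a. \<forall>k. dep P (f k) (f (Suc k)))"

definition bounded_prog :: "'a program \<Rightarrow> bool" where
  "bounded_prog P \<longleftrightarrow> (\<forall>a. finite (def_of P a))"

record 'a agent =
  IDB :: "'a program"
  HBE :: "'a set"
  HIN :: "'a set"
  init_EDB :: "'a set"
  init_IN :: "'a set"

type_synonym 'a astate = "'a set \<times> 'a set"  \<comment> \<open>(EDB, IN)\<close>

definition wf_agent :: "'a agent \<Rightarrow> bool" where
  "wf_agent A \<longleftrightarrow> acyclic_prog (IDB A)
     \<and> HBE A \<inter> heads (IDB A) = {} \<and> HIN A \<inter> heads (IDB A) = {}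
     \<and> HBE A \<inter> HIN A = {}
     \<and> init_EDB A \<subseteq> HBE A \<and> init_IN A \<subseteq> HIN A"

text \<open>The (unique, since the program is acyclic) stable model of the agent at a state.\<close>
definition agent_model :: "'a agent \<Rightarrow> 'a astate \<Rightarrow> 'a set" where
  "agent_model A st = (THE S. stable_model (IDB A \<union> facts (fst st) \<union> facts (snd st)) S)"

type_synonym 'a mas = "'a agent list"

definition HB_ag :: "'a agent \<Rightarrow> 'a set" where
  "HB_ag A = heads (IDB A) \<union> HBE A \<union> HIN A"

definition coop_mas :: "'a mas \<Rightarrow> bool" where
  "coop_mas As \<longleftrightarrow>
     (\<forall>i<length As. wf_agent (As ! i))
   \<and> (\<forall>i<length As. \<forall>j<length As. \<forall>a \<in> heads (IDB (As ! i)) \<inter> heads (IDB (As ! j)).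
        def_of (IDB (As ! i)) a = def_of (IDB (As ! j)) a)
   \<and> (\<forall>i<length As. HIN (As ! i) \<subseteq> (\<Union>j<length As. heads (IDB (As ! j)) \<union> HBE (As ! j)))
   \<and> (\<forall>i<length As. \<forall>j<length As. HBE (As ! i) \<inter> heads (IDB (As ! j)) = {})"

definition Dep :: "'a mas \<Rightarrow> nat \<Rightarrow> nat \<Rightarrow> 'a set" where
  "Dep As i j = HIN (As ! i) \<inter> (heads (IDB (As ! j)) \<union> HBE (As ! j))"

definition IDB_mas :: "'a mas \<Rightarrow> 'a program" where
  "IDB_mas As = (\<Union>i<length As. IDB (As ! i))"

definition input_atoms :: "'a mas \<Rightarrow> 'a set" where
  "input_atoms As = (\<Union>i<length As. HIN (As ! i))"

definition io_nodes :: "'a mas \<Rightarrow> 'a set" where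
  "io_nodes As = {b. \<exists>h \<in> input_atoms As. relevant (IDB_mas As) b h}"

definition io_edge :: "'a mas \<Rightarrow> 'a \<Rightarrow> 'a \<Rightarrow> bool" where
  "io_edge As a b \<longleftrightarrow> a \<in> io_nodes As \<and> b \<in> io_nodes As \<and> dep (IDB_mas As) a b"

definition io_acyclic :: "'a mas \<Rightarrow> bool" where
  "io_acyclic As \<longleftrightarrow> \<not> (\<exists>f::nat \<Rightarrow> 'a. \<forall>k. io_edge As (f k) (f (Suc k)))"

definition bounded_mas :: "'a mas \<Rightarrow> bool" where
  "bounded_mas As \<longleftrightarrow> bounded_prog (IDB_mas As)"

text \<open>Env T F: environment change; Comm j i: communication j ~> i.\<close>
datatype 'a label = Env "'a set" "'a set" | Comm nat nat

fun is_env :: "'a label \<Rightarrow> bool" where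
  "is_env (Env _ _) = True"
| "is_env (Comm _ _) = False"

type_synonym 'a sstate = "nat \<Rightarrow> 'a astate"

fun step :: "'a mas \<Rightarrow> 'a label \<Rightarrow> 'a sstate \<Rightarrow> 'a sstate" where
  "step As (Env T F) st =
     (\<lambda>i. ((fst (st i) - (F \<inter> HBE (As ! i))) \<union> (T \<inter> HBE (As ! i)), snd (st i)))"
| "step As (Comm j i) st =
     st(i := (fst (st i), (snd (st i) - Dep As i j) \<union> (Dep As i j \<inter> agent_model (As ! j) (st j))))"

primrec run_state :: "'a mas \<Rightarrow> (nat \<Rightarrow> 'a label) \<Rightarrow> nat \<Rightarrow> 'a sstate" where
  "run_state As lab 0 = (\<lambda>i. (init_EDB (As ! i), init_IN (As ! i)))"
| "run_state As lab (Suc k) = step As (lab k) (run_state As lab k)"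

definition is_run :: "'a mas \<Rightarrow> (nat \<Rightarrow> 'a label) \<Rightarrow> bool" where
  "is_run As lab \<longleftrightarrow>
     (\<forall>k i j. lab k = Comm j i \<longrightarrow> i < length As \<and> j < length As)
   \<and> (\<forall>i<length As. \<forall>j<length As. Dep As i j \<noteq> {} \<longrightarrow> (\<forall>k. \<exists>k'\<ge>k. lab k' = Comm j i))
   \<and> (\<exists>k0. \<forall>k\<ge>k0. \<not> is_env (lab k))"

definition Mod :: "'a mas \<Rightarrow> (nat \<Rightarrow> 'a label) \<Rightarrow> nat \<Rightarrow> nat \<Rightarrow> 'a set" where
  "Mod As lab i k = agent_model (As ! i) (run_state As lab k i)"

definition convergent :: "'a mas \<Rightarrow> (nat \<Rightarrow> 'a label) \<Rightarrow> bool" where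
  "convergent As lab \<longleftrightarrow> (\<forall>a. \<exists>k0.
      (\<forall>k\<ge>k0. \<forall>i<length As. a \<in> HB_ag (As ! i) \<longrightarrow> a \<in> Mod As lab i k)
    \<or> (\<forall>k\<ge>k0. \<forall>i<length As. a \<in> HB_ag (As ! i) \<longrightarrow> a \<notin> Mod As lab i k))"

definition strongly_convergent :: "'a mas \<Rightarrow> (nat \<Rightarrow> 'a label) \<Rightarrow> bool" where
  "strongly_convergent As lab \<longleftrightarrow> convergent As lab \<and>
     (\<exists>k0. \<forall>k\<ge>k0. \<forall>i<length As. Mod As lab i k = Mod As lab i k0)"

definition Conv :: "'a mas \<Rightarrow> (nat \<Rightarrow> 'a label) \<Rightarrow> 'a set" where
  "Conv As lab = {a. (\<exists>i<length As. a \<in> HB_ag (As ! i)) \<and>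
     (\<exists>k0. \<forall>k\<ge>k0. \<forall>i<length As. a \<in> HB_ag (As ! i) \<longrightarrow> a \<in> Mod As lab i k)}"

definition env_stop :: "(nat \<Rightarrow> 'a label) \<Rightarrow> nat" where
  "env_stop lab = (LEAST k0. \<forall>k\<ge>k0. \<not> is_env (lab k))"

definition stab_env :: "'a mas \<Rightarrow> (nat \<Rightarrow> 'a label) \<Rightarrow> 'a set" where
  "stab_env As lab = (\<Union>i<length As. fst (run_state As lab (env_stop lab) i))"

definition weakly_stabilizing :: "'a mas \<Rightarrow> bool" where
  "weakly_stabilizing As \<longleftrightarrow> (\<forall>lab. is_run As lab \<longrightarrow>
      convergent As lab \<and>
      stable_model (IDB_mas As \<union> facts (stab_env As lab)) (Conv As lab))"

definition stabilizing :: "'a mas \<Rightarrow> bool" where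
  "stabilizing As \<longleftrightarrow> weakly_stabilizing As \<and>
     (\<forall>lab. is_run As lab \<longrightarrow> strongly_convergent As lab)"

end

theory Submission
  imports Defs
begin

text \<open>Agent 0 knows the environment fact 0 and the rules 2k+2 \<leftarrow> 2k+1; agent 1 has the
  rules 2k+1 \<leftarrow> 2k. Every dependency goes from n+1 down to n and every atom has at most one
  defining clause, so the system is IO-acyclic and bounded. Yet under the run in which the two
  agents take turns passing their models to each other, each exchange lets the receiver derive one
  new atom: after 2m steps agent 0 believes exactly 0, ..., 2m. Its model grows forever, so the
  run is not strongly convergent. IO-acyclicity only forbids infinite descending chains of
  dependencies; it does not prevent the agents from climbing an infinite ascending one.\<close>

lemma reduct_negation_free:
  assumes "\<forall>c\<in>P. cneg c = []"
  shows "reduct P S = P"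
proof -
  have "c = Clause (chead c) (cpos c) []" if "c \<in> P" for c
    using assms that by (metis clause.collapse)
  then show ?thesis
    unfolding reduct_def by (auto, metis empty_set inf_bot_left)
qed

lemma agent_model_negation_free:
  assumes "\<forall>c\<in>IDB A. cneg c = []"
  shows "agent_model A st = least_model (IDB A \<union> facts (fst st) \<union> facts (snd st))"
proof -
  let ?P = "IDB A \<union> facts (fst st) \<union> facts (snd st)"
  have "\<forall>c\<in>?P. cneg c = []"
    using assms by (auto simp: facts_def)
  then have "stable_model ?P S \<longleftrightarrow> S = least_model ?P" for S
    by (simp add: stable_model_def reduct_negation_free)
  then show ?thesis
    unfolding agent_model_def by (intro the_equality) auto
qed

lemma least_model_eqI:
  assumes "is_def_model P M" and "\<And>I. is_def_model P I \<Longrightarrow> M \<subseteq> I"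
  shows "least_model P = M"
  using assms unfolding least_model_def by blast

lemma is_def_modelD: "is_def_model P I \<Longrightarrow> c \<in> P \<Longrightarrow> set (cpos c) \<subseteq> I \<Longrightarrow> chead c \<in> I"
  by (simp add: is_def_model_def)

lemma facts_Un: "facts X \<union> facts Y = facts (X \<union> Y)"
  by (auto simp: facts_def)

lemma acyclic_prog_iff_wfp: "acyclic_prog P \<longleftrightarrow> wfp (\<lambda>b a. dep P a b)"
  unfolding acyclic_prog_def wfp_def wf_iff_no_infinite_down_chain by simp

lemma acyclic_prog_if_dep_less:
  fixes P :: "'a::wellorder program"
  assumes "\<And>a b. dep P a b \<Longrightarrow> b < a"
  shows "acyclic_prog P"
  unfolding acyclic_prog_iff_wfp using wfp_on_less
  by (rule wfp_subset) (use assms in blast)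

lemma io_acyclic_if_acyclic_prog: "acyclic_prog (IDB_mas As) \<Longrightarrow> io_acyclic As"
  unfolding acyclic_prog_def io_acyclic_def io_edge_def by blast

definition chain_program :: "nat set \<Rightarrow> nat program" where
  "chain_program N = (\<lambda>n. Clause (Suc n) [n] []) ` N"

lemma heads_chain_program: "heads (chain_program N) = Suc ` N"
  by (simp add: heads_def chain_program_def image_image)

lemma chain_program_negation_free: "\<forall>c\<in>chain_program N. cneg c = []"
  by (simp add: chain_program_def)

lemma dep_chain_program: "dep (chain_program N) a b \<longleftrightarrow> b \<in> N \<and> a = Suc b"
  by (auto simp: dep_def chain_program_def)

lemma acyclic_prog_chain_program: "acyclic_prog (chain_program N)"
  by (rule acyclic_prog_if_dep_less) (simp add: dep_chain_program)

lemma chain_program_Un: "chain_program N \<union> chain_program N' = chain_program (N \<union> N')"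
  by (auto simp: chain_program_def)

lemma bounded_prog_chain_program: "bounded_prog (chain_program N)"
  unfolding bounded_prog_def
proof
  fix a
  have "def_of (chain_program N) a \<subseteq> {Clause a [a - 1] []}"
    by (auto simp: def_of_def chain_program_def)
  then show "finite (def_of (chain_program N) a)"
    by (rule finite_subset) simp
qed

lemma least_model_chain_program:
  assumes facts: "X \<subseteq> M"
    and closed: "\<And>n. n \<in> N \<Longrightarrow> n \<in> M \<Longrightarrow> Suc n \<in> M"
    and supported: "\<And>a. a \<in> M \<Longrightarrow> a \<notin> X \<Longrightarrow> \<exists>n\<in>N. a = Suc n \<and> n \<in> M"
  shows "least_model (chain_program N \<union> facts X) = M"
proof (rule least_model_eqI)
  show "is_def_model (chain_program N \<union> facts X) M"
    using facts closed by (auto simp: is_def_model_def chain_program_def facts_def)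
next
  fix I assume I: "is_def_model (chain_program N \<union> facts X) I"
  have "a \<in> I" if "a \<in> M" for a
    using that
  proof (induction a rule: less_induct)
    case (less a)
    show ?case
    proof (cases "a \<in> X")
      case True
      then have "Clause a [] [] \<in> chain_program N \<union> facts X"
        by (simp add: facts_def)
      from is_def_modelD[OF I this] show ?thesis
        by simp
    next
      case False
      then obtain n where n: "n \<in> N" "a = Suc n" "n \<in> M"
        using supported less.prems by blast
      then have "Clause a [n] [] \<in> chain_program N \<union> facts X"
        by (simp add: chain_program_def)
      from is_def_modelD[OF I this] show ?thesis
        using less.IH n by simp
    qed
  qed
  then show "M \<subseteq> I" by blast
qed

lemma Suc_image_odd: "Suc ` {n. odd n} = {n. even n \<and> n \<noteq> 0}"
  by (auto simp: image_iff) presburger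

lemma Suc_image_even: "Suc ` {n. even n} = {n. odd n}"
  by (auto simp: image_iff) presburger

definition agent0 :: "nat agent" where
  "agent0 = \<lparr>IDB = chain_program {n. odd n}, HBE = {0}, HIN = {n. odd n},
             init_EDB = {0}, init_IN = {}\<rparr>"

definition agent1 :: "nat agent" where
  "agent1 = \<lparr>IDB = chain_program {n. even n}, HBE = {}, HIN = {n. even n},
             init_EDB = {}, init_IN = {}\<rparr>"

definition relay :: "nat mas" where
  "relay = [agent0, agent1]"

definition alternating :: "nat \<Rightarrow> nat label" where
  "alternating k = (if even k then Comm 0 1 else Comm 1 0)"

text \<open>Agent indices are written Suc 0 rather than 1, the simp normal form of 1 :: nat,
  so that these facts still apply after simplification.\<close>
lemma relay_nth: "relay ! 0 = agent0" "relay ! Suc 0 = agent1"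
  by (simp_all add: relay_def)

lemma length_relay: "length relay = 2"
  by (simp add: relay_def)

lemma wf_agent0: "wf_agent agent0"
  by (auto simp: wf_agent_def agent0_def acyclic_prog_chain_program heads_chain_program Suc_image_odd)

lemma wf_agent1: "wf_agent agent1"
  by (auto simp: wf_agent_def agent1_def acyclic_prog_chain_program heads_chain_program Suc_image_even)

lemma coop_mas_relay: "coop_mas relay"
  by (simp add: coop_mas_def relay_def All_less_Suc lessThan_Suc wf_agent0 wf_agent1)
    (auto simp: agent0_def agent1_def heads_chain_program Suc_image_odd Suc_image_even)

lemma IDB_mas_relay: "IDB_mas relay = chain_program UNIV"
proof -
  have "IDB_mas relay = chain_program {n. odd n} \<union> chain_program {n. even n}"
    by (auto simp: IDB_mas_def relay_def lessThan_Suc agent0_def agent1_def)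
  also have "\<dots> = chain_program UNIV"
    unfolding chain_program_Un by (rule arg_cong[where f = chain_program]) auto
  finally show ?thesis .
qed

lemma Dep_relay:
  "Dep relay 0 0 = {}" "Dep relay 0 (Suc 0) = {n. odd n}"
  "Dep relay (Suc 0) 0 = {n. even n}" "Dep relay (Suc 0) (Suc 0) = {}"
  by (auto simp: Dep_def relay_def agent0_def agent1_def heads_chain_program
      Suc_image_odd Suc_image_even)

lemma agent_model_agent0: "agent_model agent0 ({0}, {n. odd n \<and> n < 2 * m}) = {..2 * m}"
proof -
  have "agent_model agent0 ({0}, {n. odd n \<and> n < 2 * m})
      = least_model (chain_program {n. odd n} \<union> facts ({0} \<union> {n. odd n \<and> n < 2 * m}))"
    by (subst agent_model_negation_free)
      (simp_all add: agent0_def chain_program_negation_free facts_Un sup_assoc)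
  also have "\<dots> = {..2 * m}"
  proof (rule least_model_chain_program)
    show "Suc n \<in> {..2 * m}" if "n \<in> {n. odd n}" "n \<in> {..2 * m}" for n
    proof -
      from that have "odd n" "n \<le> 2 * m" by auto
      then show ?thesis by simp presburger
    qed
    show "\<exists>n\<in>{n. odd n}. a = Suc n \<and> n \<in> {..2 * m}"
      if "a \<in> {..2 * m}" "a \<notin> {0} \<union> {n. odd n \<and> n < 2 * m}" for a
    proof -
      from that have "a \<le> 2 * m" "a \<noteq> 0" "\<not> (odd a \<and> a < 2 * m)" by auto
      then have "odd (a - 1)" "a = Suc (a - 1)" by presburger+
      with \<open>a \<le> 2 * m\<close> show ?thesis by (intro bexI[of _ "a - 1"]) auto
    qed
  qed auto
  finally show ?thesis .
qed

lemma agent_model_agent1: "agent_model agent1 ({}, {n. even n \<and> n < 2 * m}) = {..<2 * m}"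
proof -
  have "agent_model agent1 ({}, {n. even n \<and> n < 2 * m})
      = least_model (chain_program {n. even n} \<union> facts {n. even n \<and> n < 2 * m})"
    by (subst agent_model_negation_free)
      (simp_all add: agent1_def chain_program_negation_free facts_def)
  also have "\<dots> = {..<2 * m}"
  proof (rule least_model_chain_program)
    show "Suc n \<in> {..<2 * m}" if "n \<in> {n. even n}" "n \<in> {..<2 * m}" for n
    proof -
      from that have "even n" "n < 2 * m" by auto
      then show ?thesis by simp presburger
    qed
    show "\<exists>n\<in>{n. even n}. a = Suc n \<and> n \<in> {..<2 * m}"
      if "a \<in> {..<2 * m}" "a \<notin> {n. even n \<and> n < 2 * m}" for a
    proof -
      from that have "a < 2 * m" "\<not> (even a \<and> a < 2 * m)" by auto
      then have "even (a - 1)" "a = Suc (a - 1)" by presburger+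
      with \<open>a < 2 * m\<close> show ?thesis by (intro bexI[of _ "a - 1"]) auto
    qed
  qed auto
  finally show ?thesis .
qed

lemma run_state_alternating:
  "run_state relay alternating (2 * m) 0 = ({0}, {n. odd n \<and> n < 2 * m}) \<and>
   run_state relay alternating (2 * m) (Suc 0) = ({}, {n. even n \<and> n < 2 * m})"
proof (induction m)
  case 0
  show ?case by (simp add: relay_def agent0_def agent1_def)
next
  case (Suc m)
  let ?s = "run_state relay alternating (2 * m)"
  let ?s' = "run_state relay alternating (Suc (2 * m))"
  have s': "?s' = step relay (Comm 0 1) ?s"
    by (simp add: alternating_def)
  have s'0: "?s' 0 = ?s 0"
    unfolding s' by simp
  have "?s' (Suc 0) = (fst (?s (Suc 0)),
      snd (?s (Suc 0)) - Dep relay (Suc 0) 0 \<union> Dep relay (Suc 0) 0 \<inter> agent_model (relay ! 0) (?s 0))"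
    unfolding s' by simp
  also have "\<dots> = ({}, {n. even n \<and> n < 2 * Suc m})"
    unfolding Dep_relay relay_nth Suc.IH[THEN conjunct1] agent_model_agent0
    using Suc.IH by auto
  finally have s'1: "?s' (Suc 0) = ({}, {n. even n \<and> n < 2 * Suc m})" .
  have s'': "run_state relay alternating (2 * Suc m) = step relay (Comm 1 0) ?s'"
    by (simp add: alternating_def)
  have "run_state relay alternating (2 * Suc m) 0 = (fst (?s' 0),
      snd (?s' 0) - Dep relay 0 (Suc 0) \<union> Dep relay 0 (Suc 0) \<inter> agent_model (relay ! Suc 0) (?s' (Suc 0)))"
    unfolding s'' by simp
  also have "\<dots> = ({0}, {n. odd n \<and> n < 2 * Suc m})"
    unfolding Dep_relay relay_nth s'0 s'1 agent_model_agent1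
    using Suc.IH by auto
  finally show ?case
    using s'' s'1 by simp
qed

lemma Mod_agent0_alternating: "Mod relay alternating 0 (2 * m) = {..2 * m}"
  using run_state_alternating[of m]
  by (simp add: Mod_def relay_def agent_model_agent0)

lemma is_run_alternating: "is_run relay alternating"
  unfolding is_run_def
proof (intro conjI)
  show "\<forall>k i j. alternating k = Comm j i \<longrightarrow> i < length relay \<and> j < length relay"
    by (simp add: alternating_def relay_def)
  show "\<exists>k0. \<forall>k\<ge>k0. \<not> is_env (alternating k)"
    by (simp add: alternating_def)
  have "\<exists>k'\<ge>k. alternating k' = Comm j i" if "i < 2" "j < 2" "i \<noteq> j" for i j k
  proof -
    have "alternating (2 * k + j) = Comm j i"
      using that by (auto simp: alternating_def dest!: less_2_cases)
    then show ?thesis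
      by (intro exI[of _ "2 * k + j"]) simp
  qed
  moreover have "Dep relay i i = {}" if "i < 2" for i
    using that by (auto simp: Dep_relay dest!: less_2_cases)
  ultimately show "\<forall>i<length relay. \<forall>j<length relay. Dep relay i j \<noteq> {} \<longrightarrow>
      (\<forall>k. \<exists>k'\<ge>k. alternating k' = Comm j i)"
    unfolding length_relay by blast
qed

lemma not_strongly_convergent_alternating: "\<not> strongly_convergent relay alternating"
proof
  assume "strongly_convergent relay alternating"
  then obtain k0 where const: "\<forall>k\<ge>k0. \<forall>i<length relay. Mod relay alternating i k = Mod relay alternating i k0"
    unfolding strongly_convergent_def by blast
  have eventually_const: "Mod relay alternating 0 k = Mod relay alternating 0 k0" if "k \<ge> k0" for k
    using const[rule_format, OF that, of 0] by (simp add: length_relay)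
  have "Mod relay alternating 0 (2 * Suc k0) = Mod relay alternating 0 (2 * k0)"
    using eventually_const[of "2 * Suc k0"] eventually_const[of "2 * k0"] by simp
  then have "{..2 * Suc k0} = {..2 * k0}"
    unfolding Mod_agent0_alternating .
  then have "2 * Suc k0 \<le> 2 * k0"
    by (metis atMost_iff order_refl)
  then show False
    by simp
qed

theorem theorem2:
  shows "\<exists>As :: nat mas. coop_mas As \<and> io_acyclic As \<and> bounded_mas As \<and> \<not> stabilizing As"
proof (intro exI conjI)
  show "coop_mas relay" by (rule coop_mas_relay)
  show "io_acyclic relay"
    by (rule io_acyclic_if_acyclic_prog) (simp add: IDB_mas_relay acyclic_prog_chain_program)
  show "bounded_mas relay"
    by (simp add: bounded_mas_def IDB_mas_relay bounded_prog_chain_program)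
  show "\<not> stabilizing relay"
    using is_run_alternating not_strongly_convergent_alternating by (auto simp: stabilizing_def)
qed

end
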